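(* Let $G$ be an undirected graph with double cover $H$. For any nonempty simple set $S\subset V_H$, let $L=\{u:u_1\in S\}$ and $R=\{u:u_2\in S\}$. Then $\beta_G(L,R)=\Phi_H(S)$.
   Context: $G$ is unweighted; $\mathrm{vol}(S)=\sum_{v\in S}\deg(v)$; $e(A,B)$ is the number of edges between disjoint $A,B$. $\beta_G(L,R)=1-\frac{2e(L,R)}{\mathrm{vol}(L\cup R)}$. Conductance: $\Phi_H(S)=\frac{|\partial S|}{\min\{\mathrm{vol}(S),\mathrm{vol}(V_H\setminus S)\}}$. The double cover $H$ has vertices $v_1,v_2$ for each $v\in V_G$ and edges $\{u_1,v_2\},\{u_2,v_1\}$ for each $\{u,v\}\in E_G$. A set $S\subset V_H$ is simple if $|\{v_1,v_2\}\cap S|\le1$ for all $v\in V_G$. *)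

theory Defs
  imports Main Complex_Main
begin

definition ugraph :: "'a set \<Rightarrow> 'a set set \<Rightarrow> bool" where
  "ugraph V E \<longleftrightarrow> finite V \<and> (\<forall>e\<in>E. \<exists>u v. e = {u, v} \<and> u \<noteq> v \<and> u \<in> V \<and> v \<in> V)"

definition deg :: "'a set set \<Rightarrow> 'a \<Rightarrow> nat" where
  "deg E v = card {e \<in> E. v \<in> e}"

definition vol :: "'a set set \<Rightarrow> 'a set \<Rightarrow> nat" where
  "vol E S = (\<Sum>v\<in>S. deg E v)"

definition e_between :: "'a set set \<Rightarrow> 'a set \<Rightarrow> 'a set \<Rightarrow> nat" where
  "e_between E A B = card {e \<in> E. \<exists>u\<in>A. \<exists>v\<in>B. e = {u, v}}"

definition beta :: "'a set set \<Rightarrow> 'a set \<Rightarrow> 'a set \<Rightarrow> real" where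
  "beta E L R = 1 - 2 * real (e_between E L R) / real (vol E (L \<union> R))"

definition boundary :: "'a set \<Rightarrow> 'a set set \<Rightarrow> 'a set \<Rightarrow> 'a set set" where
  "boundary V E S = {e \<in> E. \<exists>x\<in>S. \<exists>y\<in>V - S. e = {x, y}}"

definition conductance :: "'a set \<Rightarrow> 'a set set \<Rightarrow> 'a set \<Rightarrow> real" where
  "conductance V E S = real (card (boundary V E S)) / real (min (vol E S) (vol E (V - S)))"

text \<open>Double cover: vertex v_i is represented as (v, i), i \<in> {1,2}.\<close>
definition cover_V :: "'a set \<Rightarrow> ('a \<times> nat) set" where
  "cover_V V = V \<times> {1, 2}"

definition cover_E :: "'a set set \<Rightarrow> ('a \<times> nat) set set" where
  "cover_E E = {{(u, 1), (v, 2)} | u v. {u, v} \<in> E}"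

definition simple_set :: "'a set \<Rightarrow> ('a \<times> nat) set \<Rightarrow> bool" where
  "simple_set V S \<longleftrightarrow> (\<forall>v\<in>V. card ({(v, 1), (v, 2)} \<inter> S) \<le> 1)"

end

theory Submission
  imports Defs
begin

(*
  Count arcs, i.e. ordered pairs (u, w) with {u, w} an edge of G; the arc (u, w) is the
  edge {u\<^sub>1, w\<^sub>2} of the double cover H. If P is the set of arcs leaving L and Q the
  set of arcs entering R, then vol L = |P|, vol R = |Q|, the boundary of S corresponds to the
  symmetric difference of P and Q, and (as L and R are disjoint for simple S) P \<inter> Q corresponds
  to the edges between L and R. Hence vol\<^sub>H S = vol (L \<union> R) = |\<partial>S| + 2 e(L, R), which turns
  \<beta>(L, R) into |\<partial>S| / vol\<^sub>H S. Finally vol\<^sub>H S \<le> vol V = vol\<^sub>H V\<^sub>H / 2, so S is the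
  smaller side in the conductance.
*)

lemma card_filter_add_card_filter:
  assumes "finite X"
  shows "card {x \<in> X. P x} + card {x \<in> X. Q x}
    = card {x \<in> X. P x \<noteq> Q x} + 2 * card {x \<in> X. P x \<and> Q x}"
proof -
  define A B C D where "A = {x \<in> X. P x}" and "B = {x \<in> X. Q x}"
    and "C = {x \<in> X. P x \<noteq> Q x}" and "D = {x \<in> X. P x \<and> Q x}"
  have fin: "finite A" "finite B" "finite C" "finite D"
    using assms unfolding A_def B_def C_def D_def by simp_all
  have "A \<union> B = C \<union> D" "A \<inter> B = D" "C \<inter> D = {}"
    unfolding A_def B_def C_def D_def by blast+
  then have "card A + card B = card C + 2 * card D"
    using card_Un_Int[OF fin(1,2)] card_Un_disjoint[OF fin(3,4)] by simp
  then show ?thesis unfolding A_def B_def C_def D_def .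
qed

definition arcs :: "'a set set \<Rightarrow> ('a \<times> 'a) set" where
  "arcs E = {(u, w). {u, w} \<in> E}"

definition cover_edge :: "'a \<times> 'a \<Rightarrow> ('a \<times> nat) set" where
  "cover_edge a = {(fst a, 1), (snd a, 2)}"

lemma ugraph_edge_in_vertices:
  assumes "ugraph V E" and "{u, w} \<in> E"
  shows "u \<in> V" and "w \<in> V"
  using assms unfolding ugraph_def by (metis insertCI insertE singletonD)+

lemma arcs_subset: "ugraph V E \<Longrightarrow> arcs E \<subseteq> V \<times> V"
  unfolding arcs_def by (auto dest: ugraph_edge_in_vertices)

lemma finite_arcs: "ugraph V E \<Longrightarrow> finite (arcs E)"
  using arcs_subset unfolding ugraph_def by (metis finite_SigmaI finite_subset)

lemma finite_cover_side:
  assumes "ugraph V E" and "S \<subseteq> cover_V V"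
  shows "finite {u. (u, i) \<in> S}"
  using assms unfolding ugraph_def cover_V_def by (auto intro: finite_subset)

lemma image_swap_arcs: "prod.swap ` arcs E = arcs E"
  unfolding arcs_def by (auto simp: insert_commute image_iff)

lemma card_arcs_filter_swap:
  "card {a \<in> arcs E. P (snd a) (fst a)} = card {a \<in> arcs E. P (fst a) (snd a)}"
proof -
  have "{a \<in> arcs E. P (snd a) (fst a)} = prod.swap ` {a \<in> arcs E. P (fst a) (snd a)}"
    using image_swap_arcs by force
  then show ?thesis by (simp add: card_image)
qed

lemma deg_eq_card_arcs:
  assumes "ugraph V E"
  shows "deg E v = card {a \<in> arcs E. fst a = v}"
proof -
  have "{e \<in> E. v \<in> e} = (\<lambda>a. {fst a, snd a}) ` {a \<in> arcs E. fst a = v}"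
  proof (intro equalityI subsetI)
    fix e assume "e \<in> {e \<in> E. v \<in> e}"
    moreover obtain u w where "e = {u, w}"
      using assms calculation unfolding ugraph_def by blast
    ultimately show "e \<in> (\<lambda>a. {fst a, snd a}) ` {a \<in> arcs E. fst a = v}"
      unfolding arcs_def by (auto simp: insert_commute image_iff)
  qed (auto simp: arcs_def)
  moreover have "inj_on (\<lambda>a. {fst a, snd a}) {a \<in> arcs E. fst a = v}"
    by (auto simp: inj_on_def doubleton_eq_iff prod_eq_iff)
  ultimately show ?thesis unfolding deg_def using card_image by fastforce
qed

lemma vol_eq_card_arcs:
  assumes "ugraph V E" and "finite A"
  shows "vol E A = card {a \<in> arcs E. fst a \<in> A}"
proof -
  have "{a \<in> arcs E. fst a \<in> A} = (\<Union>v\<in>A. {a \<in> arcs E. fst a = v})" by auto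
  moreover have "card (\<Union>v\<in>A. {a \<in> arcs E. fst a = v}) = (\<Sum>v\<in>A. card {a \<in> arcs E. fst a = v})"
    using assms finite_arcs[OF assms(1)] by (intro card_UN_disjoint) auto
  ultimately show ?thesis
    unfolding vol_def using deg_eq_card_arcs[OF assms(1)] by simp
qed

lemma vol_eq_card_arcs_snd:
  assumes "ugraph V E" and "finite A"
  shows "vol E A = card {a \<in> arcs E. snd a \<in> A}"
  using vol_eq_card_arcs[OF assms] card_arcs_filter_swap[where P = "\<lambda>u w. w \<in> A"] by simp

lemma cover_E_eq_image: "cover_E E = cover_edge ` arcs E"
  unfolding cover_E_def cover_edge_def arcs_def image_def by fastforce

lemma inj_cover_edge: "inj cover_edge"
  by (auto simp: inj_def cover_edge_def doubleton_eq_iff prod_eq_iff)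

lemma card_cover_E_filter:
  "card {e \<in> cover_E E. P e} = card {a \<in> arcs E. P (cover_edge a)}"
proof -
  have "{e \<in> cover_E E. P e} = cover_edge ` {a \<in> arcs E. P (cover_edge a)}"
    unfolding cover_E_eq_image by blast
  then show ?thesis by (simp add: card_image inj_on_subset[OF inj_cover_edge])
qed

lemma deg_cover:
  assumes "ugraph V E" and "i \<in> {1, 2}"
  shows "deg (cover_E E) (v, i) = deg E v"
proof -
  have "deg (cover_E E) (v, i) = card {a \<in> arcs E. (v, i) \<in> cover_edge a}"
    unfolding deg_def card_cover_E_filter ..
  also have "\<dots> = card {a \<in> arcs E. fst a = v}"
  proof (cases "i = 1")
    case True
    then show ?thesis by (auto simp: cover_edge_def intro: arg_cong[where f = card])
  next
    case False
    then have "{a \<in> arcs E. (v, i) \<in> cover_edge a} = {a \<in> arcs E. snd a = v}"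
      using assms(2) by (auto simp: cover_edge_def)
    then show ?thesis using card_arcs_filter_swap[where P = "\<lambda>u w. w = v"] by simp
  qed
  finally show ?thesis using deg_eq_card_arcs[OF assms(1)] by simp
qed

lemma vol_cover:
  assumes "ugraph V E" and "S \<subseteq> cover_V V"
  shows "vol (cover_E E) S = vol E {u. (u, 1) \<in> S} + vol E {u. (u, 2) \<in> S}"
proof -
  define L R where "L = {u. (u, 1) \<in> S}" and "R = {u. (u, 2) \<in> S}"
  have fin: "finite L" "finite R"
    using finite_cover_side[OF assms] unfolding L_def R_def by blast+
  have S_eq: "S = (\<lambda>u. (u, 1)) ` L \<union> (\<lambda>u. (u, 2)) ` R"
    using assms(2) unfolding cover_V_def L_def R_def by auto
  have "vol (cover_E E) S
      = vol (cover_E E) ((\<lambda>u. (u, 1)) ` L) + vol (cover_E E) ((\<lambda>u. (u, 2)) ` R)"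
    unfolding vol_def using fin by (subst S_eq, subst sum.union_disjoint) auto
  also have "\<dots> = vol E L + vol E R"
    unfolding vol_def using deg_cover[OF assms(1)] by (simp add: sum.reindex inj_on_def)
  finally show ?thesis unfolding L_def R_def .
qed

lemma card_boundary_cover:
  assumes "ugraph V E" and "S \<subseteq> cover_V V"
  shows "card (boundary (cover_V V) (cover_E E) S)
    = card {a \<in> arcs E. ((fst a, 1) \<in> S) \<noteq> ((snd a, 2) \<in> S)}"
proof -
  have "(\<exists>x\<in>S. \<exists>y\<in>cover_V V - S. cover_edge (u, w) = {x, y}) \<longleftrightarrow> ((u, 1) \<in> S) \<noteq> ((w, 2) \<in> S)"
    if "(u, w) \<in> arcs E" for u w
  proof -
    have "(u, 1) \<in> cover_V V" "(w, 2) \<in> cover_V V"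
      using that arcs_subset[OF assms(1)] unfolding cover_V_def by auto
    moreover have "cover_edge (u, w) = {x, y} \<longleftrightarrow> x = (u, 1) \<and> y = (w, 2) \<or> x = (w, 2) \<and> y = (u, 1)"
      for x y unfolding cover_edge_def fst_conv snd_conv doubleton_eq_iff by blast
    ultimately show ?thesis by (simp add: Bex_def) blast
  qed
  then show ?thesis
    unfolding boundary_def card_cover_E_filter
    by (intro arg_cong[where f = card] Collect_cong conj_cong refl) (metis prod.collapse)
qed

lemma e_between_eq_card_arcs:
  assumes "L \<inter> R = {}"
  shows "e_between E L R = card {a \<in> arcs E. fst a \<in> L \<and> snd a \<in> R}"
proof -
  have "{e \<in> E. \<exists>u\<in>L. \<exists>v\<in>R. e = {u, v}}
      = (\<lambda>a. {fst a, snd a}) ` {a \<in> arcs E. fst a \<in> L \<and> snd a \<in> R}"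
    unfolding arcs_def by (auto intro!: image_eqI)
  moreover have "inj_on (\<lambda>a. {fst a, snd a}) {a \<in> arcs E. fst a \<in> L \<and> snd a \<in> R}"
    using assms by (auto simp: inj_on_def doubleton_eq_iff prod_eq_iff)
  ultimately show ?thesis unfolding e_between_def by (simp add: card_image)
qed

lemma simple_set_sides_disjoint:
  assumes "S \<subseteq> cover_V V" and "simple_set V S"
  shows "{u. (u, 1) \<in> S} \<inter> {u. (u, 2) \<in> S} = {}"
proof (intro equals0I)
  fix v assume v: "v \<in> {u. (u, 1) \<in> S} \<inter> {u. (u, 2) \<in> S}"
  then have "v \<in> V" using assms(1) unfolding cover_V_def by auto
  then have "card ({(v, 1), (v, 2)} \<inter> S) \<le> 1"
    using assms(2) unfolding simple_set_def by blast
  moreover have "{(v, 1::nat), (v, 2)} \<inter> S = {(v, 1), (v, 2)}" using v by auto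
  ultimately show False by simp
qed

lemma vol_simple_set_cover:
  assumes "ugraph V E" and "S \<subseteq> cover_V V" and "simple_set V S"
  shows "vol (cover_E E) S = vol E ({u. (u, 1) \<in> S} \<union> {u. (u, 2) \<in> S})"
  using vol_cover[OF assms(1,2)] simple_set_sides_disjoint[OF assms(2,3)]
    finite_cover_side[OF assms(1,2)]
  unfolding vol_def by (simp add: sum.union_disjoint)

lemma vol_simple_set_cover_le_complement:
  assumes "ugraph V E" and "S \<subseteq> cover_V V" and "simple_set V S"
  shows "vol (cover_E E) S \<le> vol (cover_E E) (cover_V V - S)"
proof -
  have fin: "finite V" using assms(1) unfolding ugraph_def by simp
  have "vol (cover_E E) S + vol (cover_E E) (cover_V V - S) = vol (cover_E E) (cover_V V)"
    unfolding vol_def using assms(2) fin by (simp add: cover_V_def sum.subset_diff)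
  also have "\<dots> = vol E V + vol E V"
    using vol_cover[OF assms(1) order_refl] unfolding cover_V_def by simp
  moreover have "vol E ({u. (u, 1) \<in> S} \<union> {u. (u, 2) \<in> S}) \<le> vol E V"
    unfolding vol_def using assms(2) fin by (intro sum_mono2) (auto simp: cover_V_def)
  ultimately show ?thesis
    using vol_simple_set_cover[OF assms] by linarith
qed

lemma vol_cover_eq_card_boundary_add_e_between:
  assumes "ugraph V E" and "S \<subseteq> cover_V V" and "simple_set V S"
  defines "L \<equiv> {u. (u, 1) \<in> S}" and "R \<equiv> {u. (u, 2) \<in> S}"
  shows "vol (cover_E E) S = card (boundary (cover_V V) (cover_E E) S) + 2 * e_between E L R"
proof -
  have "finite L" "finite R"
    using finite_cover_side[OF assms(1,2)] unfolding L_def R_def by blast+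
  then have "vol (cover_E E) S = card {a \<in> arcs E. fst a \<in> L} + card {a \<in> arcs E. snd a \<in> R}"
    using vol_cover[OF assms(1,2)] vol_eq_card_arcs[OF assms(1)] vol_eq_card_arcs_snd[OF assms(1)]
    unfolding L_def R_def by presburger
  also have "\<dots> = card {a \<in> arcs E. (fst a \<in> L) \<noteq> (snd a \<in> R)}
      + 2 * card {a \<in> arcs E. fst a \<in> L \<and> snd a \<in> R}"
    by (rule card_filter_add_card_filter[OF finite_arcs[OF assms(1)]])
  also have "\<dots> = card (boundary (cover_V V) (cover_E E) S) + 2 * e_between E L R"
    using card_boundary_cover[OF assms(1,2)]
      e_between_eq_card_arcs[OF simple_set_sides_disjoint[OF assms(2,3)]]
    unfolding L_def R_def by simp
  finally show ?thesis .
qed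

theorem lemma2:
  fixes V :: "'a set" and E :: "'a set set" and S :: "('a \<times> nat) set"
  assumes "ugraph V E"
    and "S \<subseteq> cover_V V" and "S \<noteq> {}" and "simple_set V S"
    and "vol (cover_E E) S > 0"
  shows "beta E {u. (u, 1) \<in> S} {u. (u, 2) \<in> S}
         = conductance (cover_V V) (cover_E E) S"
proof -
  define L R where "L = {u. (u, 1::nat) \<in> S}" and "R = {u. (u, 2::nat) \<in> S}"
  define b m where "b = card (boundary (cover_V V) (cover_E E) S)" and "m = e_between E L R"
  have vol_S: "vol (cover_E E) S = vol E (L \<union> R)"
    using vol_simple_set_cover[OF assms(1,2,4)] unfolding L_def R_def .
  have vol_bm: "vol (cover_E E) S = b + 2 * m"
    using vol_cover_eq_card_boundary_add_e_between[OF assms(1,2,4)]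
    unfolding L_def R_def b_def m_def .
  have "min (vol (cover_E E) S) (vol (cover_E E) (cover_V V - S)) = vol (cover_E E) S"
    using vol_simple_set_cover_le_complement[OF assms(1,2,4)] by simp
  moreover have "real b + 2 * real m > 0"
    using assms(5) vol_bm by linarith
  ultimately have "beta E L R = conductance (cover_V V) (cover_E E) S"
    using vol_S vol_bm
    unfolding beta_def conductance_def b_def[symmetric] m_def[symmetric] by (simp add: field_simps)
  then show ?thesis unfolding L_def R_def .
qed

end
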